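(* Let $H$ be a fermionic parity-preserving Hamiltonian on $h$. Then $$[H_t,H_{t'}]=0\qquad\text{for all } t,t'\in\{0,\dots,N-1\}.$$ Consequently, with $\mathcal V:=\prod_{t=0}^{N-1}e^{i\epsilon tH_t}$ and any operators $O^{(0)},\dots,O^{(N-1)}$ on $h$, $$\mathcal V\Big(\prod_{t}O^{(t)}_t\Big)\mathcal V^\dagger=\prod_te^{i\epsilon tH_t}O^{(t)}_te^{-i\epsilon tH_t},$$ where both products are taken in the same order of $t$. In other words, each factor is replaced by its Heisenberg-evolved version $(O^{(t)}(\epsilon t))_t$ with $O(s)=e^{isH}Oe^{-isH}$.
   Context: Fix integers $L\ge1$, $N\ge1$ and a real $\epsilon>0$. The space $h$. Let $h$ be the fermionic Fock space of $L$ modes with ladder operators $a_i$ satisfying the canonical anticommutation relations. The space $\mathcal H$. Let $\mathcal H$ be the Fock space generated by $a_{ti}$, $t=0,\dots,N-1$, $i=1,\dots,L$, with $\{a_{ti},a^\dagger_{t'j}\}=\delta_{tt'}\delta_{ij}$ and all other anticommutators zero. In particular, ladder operators at different $t$ anticommute. Placing operators on a slice. For an operator $O$ on $h$, $O_t$ is its image under the unital $*$-homomorphism determined by $a_i\mapsto a_{ti}$. Parity preservation. $H$ is parity preserving if it is an even polynomial in the ladder operators, i.e. each monomial contains an even number of creation/annihilation operators. *)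

theory Defs
  imports "HOL-Analysis.Analysis" "Jordan_Normal_Form.Schur_Decomposition"
begin

text \<open>Fermionic Fock space of M modes: dimension 2^M, basis vectors indexed by
  occupation bit strings n < 2^M (bit k of n = occupation of mode k).
  Operators are complex 2^M x 2^M matrices.\<close>

definition occ :: "nat \<Rightarrow> nat \<Rightarrow> bool" where
  "occ n k \<longleftrightarrow> odd (n div 2 ^ k)"

text \<open>Annihilation operator of mode k (Jordan-Wigner convention):
  a_k |n> = (-1)^(number of occupied modes below k) |n - 2^k> if mode k occupied, else 0.\<close>
definition ann :: "nat \<Rightarrow> nat \<Rightarrow> complex mat" where
  "ann M k = mat (2 ^ M) (2 ^ M) (\<lambda>(r, c).
     if occ c k \<and> r + 2 ^ k = c
     then (-1) ^ card {l. l < k \<and> occ c l} else 0)"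

definition ladder_ops :: "nat \<Rightarrow> complex mat set" where
  "ladder_ops M = {ann M k | k. k < M} \<union> {mat_adjoint (ann M k) | k. k < M}"

definition mprod :: "nat \<Rightarrow> complex mat list \<Rightarrow> complex mat" where
  "mprod n xs = foldr (\<lambda>A B. A * B) xs (1\<^sub>m n)"

text \<open>Even polynomial in the ladder operators: a finite linear combination of
  monomials (words in ladder operators), each containing an even number of factors.\<close>
definition parity_preserving :: "nat \<Rightarrow> complex mat \<Rightarrow> bool" where
  "parity_preserving M H \<longleftrightarrow>
     (\<exists>ws :: (complex \<times> complex mat list) list.
        (\<forall>(c, w) \<in> set ws. even (length w) \<and> set w \<subseteq> ladder_ops M) \<and>
        H = foldr (\<lambda>(c, w) S. c \<cdot>\<^sub>m mprod (2 ^ M) w + S) ws (0\<^sub>m (2 ^ M) (2 ^ M)))"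

definition hermitian_mat :: "complex mat \<Rightarrow> bool" where
  "hermitian_mat A \<longleftrightarrow> mat_adjoint A = A"

definition unital_star_hom :: "nat \<Rightarrow> nat \<Rightarrow> (complex mat \<Rightarrow> complex mat) \<Rightarrow> bool" where
  "unital_star_hom n m \<phi> \<longleftrightarrow>
     (\<forall>A \<in> carrier_mat n n. \<phi> A \<in> carrier_mat m m) \<and>
     (\<forall>A \<in> carrier_mat n n. \<forall>B \<in> carrier_mat n n.
        \<phi> (A + B) = \<phi> A + \<phi> B \<and> \<phi> (A * B) = \<phi> A * \<phi> B) \<and>
     (\<forall>c. \<forall>A \<in> carrier_mat n n. \<phi> (c \<cdot>\<^sub>m A) = c \<cdot>\<^sub>m \<phi> A) \<and>
     (\<forall>A \<in> carrier_mat n n. \<phi> (mat_adjoint A) = mat_adjoint (\<phi> A)) \<and>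
     \<phi> (1\<^sub>m n) = 1\<^sub>m m"

text \<open>The big space \<H> has N*L modes; the mode (t,i) (t < N, i < L) is mode t*L+i.
  slice L N t O = O_t, the image of O under the unital *-homomorphism
  determined by a_i \<mapsto> a_{ti} (normalised to 0 off the carrier to make it unique).\<close>
definition slice :: "nat \<Rightarrow> nat \<Rightarrow> nat \<Rightarrow> complex mat \<Rightarrow> complex mat" where
  "slice L N t = (THE \<phi>. unital_star_hom (2 ^ L) (2 ^ (N * L)) \<phi> \<and>
      (\<forall>i < L. \<phi> (ann L i) = ann (N * L) (t * L + i)) \<and>
      (\<forall>A. A \<notin> carrier_mat (2 ^ L) (2 ^ L) \<longrightarrow> \<phi> A = 0\<^sub>m (2 ^ (N * L)) (2 ^ (N * L))))"

definition mexp :: "complex mat \<Rightarrow> complex mat" where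
  "mexp A = mat (dim_row A) (dim_col A)
     (\<lambda>(i, j). \<Sum>k. (A ^\<^sub>m k) $$ (i, j) / of_nat (fact k))"

end

(*
  Put the L modes of slice t at the modes tL, ..., tL+L-1 of the big register. In the
  occupation-number basis the slice map has an explicit Jordan-Wigner form: a matrix element of O
  between window configurations x and y is copied to every pair of big configurations that agree
  outside the window, with the sign (-1)^(n * (|x| + |y|)), where n is the occupation below the
  window. This map is a unital *-homomorphism sending a_i to a_(tL+i), and since the a_i generate
  the whole matrix algebra it is the only one, i.e. it is O |-> O_t.

  For an even operator the sign is trivial, and an even operator on one window commutes with an
  arbitrary operator on a disjoint window: it preserves the occupation parity below that window,
  which is all the other operator's sign depends on. Hence the slices of H commute, exp(c H_t) is
  the slice of the even operator exp(c H), and conjugating the product of the O_t by the product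
  of these exponentials conjugates each factor separately.
*)

theory Submission
  imports Defs
begin

unbundle bit_operations_syntax

lemma index_mult_mat_sum:
  assumes "A \<in> carrier_mat n k" "B \<in> carrier_mat k m" "i < n" "j < m"
  shows "(A * B) $$ (i, j) = (\<Sum>l<k. A $$ (i, l) * B $$ (l, j))"
  using assms by (auto simp: scalar_prod_def atLeast0LessThan intro!: sum.cong)

lemma mat_adjoint_carrier [simp]: "A \<in> carrier_mat n m \<Longrightarrow> mat_adjoint A \<in> carrier_mat m n"
  by (auto simp: mat_adjoint_def mat_of_rows_def)

lemma mat_adjoint_dim [simp]:
  "dim_row (mat_adjoint A) = dim_col A" "dim_col (mat_adjoint A) = dim_row A"
  by (auto simp: mat_adjoint_def mat_of_rows_def)

lemma index_mat_adjoint [simp]: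
  "i < dim_col A \<Longrightarrow> j < dim_row A \<Longrightarrow> mat_adjoint A $$ (i, j) = cnj (A $$ (j, i))"
  by (auto simp: mat_adjoint_def mat_of_rows_def)

lemma mat_adjoint_one: "mat_adjoint (1\<^sub>m n :: complex mat) = 1\<^sub>m n"
  by (rule eq_matI) auto

lemma mat_adjoint_smult: "mat_adjoint (x \<cdot>\<^sub>m A) = cnj x \<cdot>\<^sub>m mat_adjoint A"
  by (rule eq_matI) auto

lemma mat_adjoint_mult:
  fixes A B :: "complex mat"
  assumes A: "A \<in> carrier_mat n k" and B: "B \<in> carrier_mat k m"
  shows "mat_adjoint (A * B) = mat_adjoint B * mat_adjoint A"
proof (rule eq_matI)
  fix i j assume "i < dim_row (mat_adjoint B * mat_adjoint A)" "j < dim_col (mat_adjoint B * mat_adjoint A)"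
  then have i: "i < m" and j: "j < n" using A B by auto
  have "mat_adjoint (A * B) $$ (i, j) = (\<Sum>l<k. cnj (B $$ (l, i)) * cnj (A $$ (j, l)))"
    using A B i j index_mult_mat_sum[OF A B j i] by (simp add: mult.commute)
  also have "\<dots> = (mat_adjoint B * mat_adjoint A) $$ (i, j)"
    using index_mult_mat_sum[OF mat_adjoint_carrier[OF B] mat_adjoint_carrier[OF A] i j] A B i j
    by (auto intro!: sum.cong)
  finally show "mat_adjoint (A * B) $$ (i, j) = (mat_adjoint B * mat_adjoint A) $$ (i, j)" .
qed (use A B in auto)

lemma mult_pow_mat_commute:
  assumes "(A :: complex mat) \<in> carrier_mat n n"
  shows "A * A ^\<^sub>m k = A ^\<^sub>m k * A"
  using assms by (induction k) (simp_all, metis assoc_mult_mat pow_carrier_mat)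

lemma mat_adjoint_pow:
  assumes B: "(B :: complex mat) \<in> carrier_mat n n"
  shows "mat_adjoint (B ^\<^sub>m k) = mat_adjoint B ^\<^sub>m k"
proof (induction k)
  case 0 then show ?case using B by (simp add: mat_adjoint_one)
next
  case (Suc k)
  then show ?case
    using mat_adjoint_mult[OF pow_carrier_mat[OF B] B] mult_pow_mat_commute[OF mat_adjoint_carrier[OF B]]
    by simp
qed

lemma occ_iff_bit: "occ n k \<longleftrightarrow> bit n k"
  by (simp add: occ_def bit_iff_odd)

lemma less_two_power_iff_bits: "(n::nat) < 2 ^ M \<longleftrightarrow> (\<forall>k. bit n k \<longrightarrow> k < M)"
proof -
  have "n < 2 ^ M \<longleftrightarrow> take_bit M n = n" by (simp add: take_bit_nat_eq_self_iff)
  also have "\<dots> \<longleftrightarrow> (\<forall>k. bit n k \<longrightarrow> k < M)"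
    by (auto simp: bit_eq_iff bit_take_bit_iff)
  finally show ?thesis .
qed

lemma bit_less_if_less_two_power: "(j::nat) < 2 ^ L \<Longrightarrow> bit j k \<Longrightarrow> k < L"
  using less_two_power_iff_bits by blast

lemma set_bit_unset_bit_eq: "bit (c::nat) k \<Longrightarrow> set_bit k (unset_bit k c) = c"
  by (auto intro!: bit_eqI simp: bit_set_bit_iff bit_unset_bit_iff)

lemma unset_bit_add_two_power: "bit (c::nat) k \<Longrightarrow> unset_bit k c + 2 ^ k = c"
  using set_bit_unset_bit_eq[of c k] set_bit_eq[of k "unset_bit k c"] by (simp add: bit_unset_bit_iff)

definition window :: "nat \<Rightarrow> nat \<Rightarrow> nat \<Rightarrow> nat" where
  "window a L n = take_bit L (drop_bit a n)"

definition same_outside :: "nat \<Rightarrow> nat \<Rightarrow> nat \<Rightarrow> nat \<Rightarrow> bool" where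
  "same_outside a L r c \<longleftrightarrow> (\<forall>l. (l < a \<or> a + L \<le> l) \<longrightarrow> bit r l = bit c l)"

definition set_window :: "nat \<Rightarrow> nat \<Rightarrow> nat \<Rightarrow> nat \<Rightarrow> nat" where
  "set_window a L r j = take_bit a r OR push_bit a j OR push_bit (a + L) (drop_bit (a + L) r)"

definition ones_below :: "nat \<Rightarrow> nat \<Rightarrow> nat" where
  "ones_below k n = card {l. l < k \<and> bit n l}"

lemma bit_window: "bit (window a L n) l \<longleftrightarrow> l < L \<and> bit n (a + l)"
  by (auto simp: window_def bit_take_bit_iff bit_drop_bit_eq)

lemma window_less: "window a L n < 2 ^ L"
  by (simp add: window_def)

lemma bit_set_window:
  "j < 2 ^ L \<Longrightarrow> bit (set_window a L r j) l \<longleftrightarrow>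
     (if a \<le> l \<and> l < a + L then bit j (l - a) else bit r l)"
  using bit_less_if_less_two_power[of j L "l - a"]
  by (auto simp: set_window_def bit_or_iff bit_take_bit_iff bit_push_bit_iff bit_drop_bit_eq)

lemma set_window_less:
  assumes "r < 2 ^ K" "j < 2 ^ L" "a + L \<le> K"
  shows "set_window a L r j < 2 ^ K"
  using assms unfolding less_two_power_iff_bits
  by (auto simp: bit_set_window[OF assms(2)] split: if_splits)

lemma window_set_window: "j < 2 ^ L \<Longrightarrow> window a L (set_window a L r j) = j"
  by (auto simp: bit_eq_iff bit_window bit_set_window dest: bit_less_if_less_two_power)

lemma same_outside_set_window: "j < 2 ^ L \<Longrightarrow> same_outside a L r (set_window a L r j)"
  by (auto simp: same_outside_def bit_set_window)

lemma set_window_window: "same_outside a L r k \<Longrightarrow> set_window a L r (window a L k) = k"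
  by (auto simp: bit_eq_iff bit_window bit_set_window window_less same_outside_def)

lemma same_outside_refl: "same_outside a L r r"
  by (simp add: same_outside_def)

lemma same_outside_sym: "same_outside a L r c \<Longrightarrow> same_outside a L c r"
  by (simp add: same_outside_def)

lemma same_outside_trans: "same_outside a L r k \<Longrightarrow> same_outside a L k c \<Longrightarrow> same_outside a L r c"
  by (simp add: same_outside_def)

lemma same_outside_window_eq:
  assumes "same_outside a L r c" "window a L r = window a L c"
  shows "r = c"
proof (rule bit_eqI)
  fix n
  show "bit r n = bit c n"
  proof (cases "n < a \<or> a + L \<le> n")
    case True then show ?thesis using assms(1) by (auto simp: same_outside_def)
  next
    case False
    then have "bit (window a L r) (n - a) = bit (window a L c) (n - a)" "n - a < L" "a + (n - a) = n"
      using assms(2) by auto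
    then show ?thesis by (simp add: bit_window)
  qed
qed

lemma ones_below_same_outside: "same_outside a L r c \<Longrightarrow> ones_below a r = ones_below a c"
  unfolding ones_below_def same_outside_def by (rule arg_cong[where f=card]) auto

lemma ones_below_add_window:
  assumes "i \<le> L"
  shows "ones_below (a + i) c = ones_below a c + ones_below i (window a L c)"
proof -
  have "{l. l < a + i \<and> bit c l} = {l. l < a \<and> bit c l} \<union> (\<lambda>l. a + l) ` {l. l < i \<and> bit (window a L c) l}"
  proof (rule Set.set_eqI)
    fix x
    show "x \<in> {l. l < a + i \<and> bit c l} \<longleftrightarrow>
        x \<in> {l. l < a \<and> bit c l} \<union> (\<lambda>l. a + l) ` {l. l < i \<and> bit (window a L c) l}"
      using assms by (cases "x < a") (auto simp: bit_window image_iff intro!: exI[of _ "x - a"])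
  qed
  moreover have "card ({l. l < a \<and> bit c l} \<union> (\<lambda>l. a + l) ` {l. l < i \<and> bit (window a L c) l})
      = card {l. l < a \<and> bit c l} + card {l. l < i \<and> bit (window a L c) l}"
    by (subst card_Un_disjoint) (auto simp: card_image)
  ultimately show ?thesis by (simp add: ones_below_def)
qed

lemma ones_below_insert_bit:
  assumes "i < L" "bit y i" "\<forall>l. bit x l \<longleftrightarrow> bit y l \<and> l \<noteq> i"
  shows "ones_below L y = Suc (ones_below L x)"
proof -
  have "{l. l < L \<and> bit y l} = insert i {l. l < L \<and> bit x l}" "i \<notin> {l. l < L \<and> bit x l}"
    using assms by auto
  then show ?thesis by (simp add: ones_below_def)
qed

lemma sum_same_outside:
  assumes "r < 2 ^ K" "a + L \<le> K"
  shows "(\<Sum>k<2 ^ K. if same_outside a L r k then g (window a L k) k else 0)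
       = (\<Sum>j<2 ^ L. g j (set_window a L r j))"
proof -
  have "{k. k < 2 ^ K \<and> same_outside a L r k} = set_window a L r ` {..<2 ^ L}"
  proof
    show "{k. k < 2 ^ K \<and> same_outside a L r k} \<subseteq> set_window a L r ` {..<2 ^ L}"
      using set_window_window window_less by (blast intro: image_eqI[OF sym])
    show "set_window a L r ` {..<2 ^ L} \<subseteq> {k. k < 2 ^ K \<and> same_outside a L r k}"
      using set_window_less[OF assms(1) _ assms(2)] same_outside_set_window by auto
  qed
  moreover have "inj_on (set_window a L r) {..<2 ^ L}"
    by (metis inj_onI lessThan_iff window_set_window)
  ultimately show ?thesis
    by (simp add: sum.If_cases Collect_conj_eq lessThan_def Int_commute sum.reindex window_set_window
        flip: lessThan_def)
qed

section \<open>The Jordan-Wigner embedding\<close>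

text \<open>\<open>embed_modes a L K\<close> places an \<open>L\<close>-mode operator on the modes \<open>a, \<dots>, a + L - 1\<close> of a
  \<open>K\<close>-mode register. Relative to \<open>ann L i\<close>, the operator \<open>ann K (a + i)\<close> carries the extra sign
  \<open>(-1) ^ ones_below a c\<close>; \<open>jw_sign\<close> attaches this sign to the odd matrix elements.\<close>

definition jw_sign :: "nat \<Rightarrow> nat \<Rightarrow> nat \<Rightarrow> nat \<Rightarrow> nat \<Rightarrow> complex" where
  "jw_sign a L c x y = (-1) ^ (ones_below a c * (ones_below L x + ones_below L y))"

definition embed_modes :: "nat \<Rightarrow> nat \<Rightarrow> nat \<Rightarrow> complex mat \<Rightarrow> complex mat" where
  "embed_modes a L K A = (if A \<in> carrier_mat (2 ^ L) (2 ^ L) then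
     mat (2 ^ K) (2 ^ K) (\<lambda>(r, c). if same_outside a L r c
        then A $$ (window a L r, window a L c) * jw_sign a L c (window a L r) (window a L c) else 0)
     else 0\<^sub>m (2 ^ K) (2 ^ K))"

lemma embed_modes_carrier [simp]: "embed_modes a L K A \<in> carrier_mat (2 ^ K) (2 ^ K)"
  by (simp add: embed_modes_def)

lemma embed_modes_dim [simp]:
  "dim_row (embed_modes a L K A) = 2 ^ K" "dim_col (embed_modes a L K A) = 2 ^ K"
  by (simp_all add: embed_modes_def)

lemma index_embed_modes:
  "A \<in> carrier_mat (2 ^ L) (2 ^ L) \<Longrightarrow> r < 2 ^ K \<Longrightarrow> c < 2 ^ K \<Longrightarrow>
   embed_modes a L K A $$ (r, c) = (if same_outside a L r c
      then A $$ (window a L r, window a L c) * jw_sign a L c (window a L r) (window a L c) else 0)"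
  by (simp add: embed_modes_def)

lemma jw_sign_mult: "jw_sign a L c x y * jw_sign a L c y z = jw_sign a L c x z"
  unfolding jw_sign_def minus_one_power_iff by auto

lemma jw_sign_diag: "jw_sign a L c x x = 1"
  unfolding jw_sign_def minus_one_power_iff by auto

lemma jw_sign_sym: "jw_sign a L c x y = jw_sign a L c y x"
  unfolding jw_sign_def by (simp add: add.commute)

lemma cnj_jw_sign: "cnj (jw_sign a L c x y) = jw_sign a L c x y"
  unfolding jw_sign_def by simp

lemma jw_sign_cong: "even (ones_below a r) = even (ones_below a c) \<Longrightarrow> jw_sign a L r x y = jw_sign a L c x y"
  unfolding jw_sign_def minus_one_power_iff by auto

lemma jw_sign_same_outside: "same_outside a L r c \<Longrightarrow> jw_sign a L r x y = jw_sign a L c x y"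
  using ones_below_same_outside[of a L r c] by (simp add: jw_sign_def)

lemma embed_modes_add:
  assumes "A \<in> carrier_mat (2 ^ L) (2 ^ L)" "B \<in> carrier_mat (2 ^ L) (2 ^ L)"
  shows "embed_modes a L K (A + B) = embed_modes a L K A + embed_modes a L K B"
  by (rule eq_matI) (use assms window_less in \<open>auto simp: index_embed_modes algebra_simps\<close>)

lemma embed_modes_smult:
  assumes "A \<in> carrier_mat (2 ^ L) (2 ^ L)"
  shows "embed_modes a L K (x \<cdot>\<^sub>m A) = x \<cdot>\<^sub>m embed_modes a L K A"
  by (rule eq_matI) (use assms window_less in \<open>auto simp: index_embed_modes algebra_simps\<close>)

lemma embed_modes_one: "embed_modes a L K (1\<^sub>m (2 ^ L)) = 1\<^sub>m (2 ^ K)"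
proof (rule eq_matI)
  fix r c assume "r < dim_row (1\<^sub>m (2 ^ K))" "c < dim_col (1\<^sub>m (2 ^ K))"
  then show "embed_modes a L K (1\<^sub>m (2 ^ L)) $$ (r, c) = 1\<^sub>m (2 ^ K) $$ (r, c)"
    using same_outside_window_eq[of a L r c] same_outside_refl[of a L r]
    by (auto simp: index_embed_modes window_less jw_sign_diag)
qed auto

lemma embed_modes_adjoint:
  assumes "A \<in> carrier_mat (2 ^ L) (2 ^ L)"
  shows "embed_modes a L K (mat_adjoint A) = mat_adjoint (embed_modes a L K A)"
proof (rule eq_matI)
  fix r c assume "r < dim_row (mat_adjoint (embed_modes a L K A))"
    "c < dim_col (mat_adjoint (embed_modes a L K A))"
  then have r: "r < 2 ^ K" and c: "c < 2 ^ K" by auto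
  show "embed_modes a L K (mat_adjoint A) $$ (r, c) = mat_adjoint (embed_modes a L K A) $$ (r, c)"
    using assms r c same_outside_sym[of a L r c] same_outside_sym[of a L c r]
      jw_sign_same_outside[of a L c r] window_less
    by (auto simp: index_embed_modes jw_sign_sym cnj_jw_sign)
qed auto

lemma index_embed_modes_mult:
  assumes A: "A \<in> carrier_mat (2 ^ L) (2 ^ L)" and M: "M \<in> carrier_mat (2 ^ K) (2 ^ K)"
    and r: "r < 2 ^ K" and c: "c < 2 ^ K" and aLK: "a + L \<le> K"
  shows "(embed_modes a L K A * M) $$ (r, c) = (\<Sum>j<2 ^ L. A $$ (window a L r, j)
     * jw_sign a L (set_window a L r j) (window a L r) j * M $$ (set_window a L r j, c))"
proof -
  have "(embed_modes a L K A * M) $$ (r, c) = (\<Sum>k<2 ^ K. embed_modes a L K A $$ (r, k) * M $$ (k, c))"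
    by (rule index_mult_mat_sum[OF embed_modes_carrier M r c])
  also have "\<dots> = (\<Sum>k<2 ^ K. if same_outside a L r k then (\<lambda>j k. A $$ (window a L r, j)
      * jw_sign a L k (window a L r) j * M $$ (k, c)) (window a L k) k else 0)"
    by (rule sum.cong) (auto simp: index_embed_modes[OF A r])
  also have "\<dots> = (\<Sum>j<2 ^ L. A $$ (window a L r, j)
     * jw_sign a L (set_window a L r j) (window a L r) j * M $$ (set_window a L r j, c))"
    by (rule sum_same_outside[OF r aLK])
  finally show ?thesis .
qed

lemma embed_modes_mult:
  assumes A: "A \<in> carrier_mat (2 ^ L) (2 ^ L)" and B: "B \<in> carrier_mat (2 ^ L) (2 ^ L)"
    and aLK: "a + L \<le> K"
  shows "embed_modes a L K (A * B) = embed_modes a L K A * embed_modes a L K B"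
proof (rule eq_matI)
  fix r c assume "r < dim_row (embed_modes a L K A * embed_modes a L K B)"
    "c < dim_col (embed_modes a L K A * embed_modes a L K B)"
  then have r: "r < 2 ^ K" and c: "c < 2 ^ K" by auto
  let ?r = "window a L r" and ?c = "window a L c" and ?s = "set_window a L r"
  have "(embed_modes a L K A * embed_modes a L K B) $$ (r, c)
      = (\<Sum>j<2 ^ L. A $$ (?r, j) * jw_sign a L (?s j) ?r j * embed_modes a L K B $$ (?s j, c))"
    by (rule index_embed_modes_mult[OF A embed_modes_carrier r c aLK])
  also have "\<dots> = (\<Sum>j<2 ^ L. if same_outside a L r c
      then A $$ (?r, j) * B $$ (j, ?c) * jw_sign a L c ?r ?c else 0)"
  proof (rule sum.cong)
    fix j :: nat assume "j \<in> {..<2 ^ L}"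
    then have j: "j < 2 ^ L" by simp
    have "same_outside a L (?s j) c \<longleftrightarrow> same_outside a L r c"
      using same_outside_set_window[OF j] same_outside_sym same_outside_trans by metis
    moreover have "same_outside a L r c \<Longrightarrow> jw_sign a L (?s j) ?r j = jw_sign a L c ?r j"
      using same_outside_set_window[OF j] same_outside_sym same_outside_trans jw_sign_same_outside
      by metis
    ultimately show "A $$ (?r, j) * jw_sign a L (?s j) ?r j * embed_modes a L K B $$ (?s j, c)
        = (if same_outside a L r c then A $$ (?r, j) * B $$ (j, ?c) * jw_sign a L c ?r ?c else 0)"
      using index_embed_modes[OF B set_window_less[OF r j aLK] c] jw_sign_mult[of a L c ?r j ?c]
      by (auto simp: window_set_window[OF j] algebra_simps)
  qed simp
  also have "\<dots> = embed_modes a L K (A * B) $$ (r, c)"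
    using index_embed_modes[OF _ r c, of "A * B"] index_mult_mat_sum[OF A B window_less window_less] A B
    by (simp add: sum_distrib_right)
  finally show "embed_modes a L K (A * B) $$ (r, c) = (embed_modes a L K A * embed_modes a L K B) $$ (r, c)" ..
qed auto

lemma embed_modes_unital_star_hom:
  "a + L \<le> K \<Longrightarrow> unital_star_hom (2 ^ L) (2 ^ K) (embed_modes a L K)"
  unfolding unital_star_hom_def
  by (simp add: embed_modes_add embed_modes_mult embed_modes_smult embed_modes_adjoint embed_modes_one)

lemma ann_carrier [simp]: "ann M k \<in> carrier_mat (2 ^ M) (2 ^ M)"
  by (simp add: ann_def)

lemma ann_dim [simp]: "dim_row (ann M k) = 2 ^ M" "dim_col (ann M k) = 2 ^ M"
  by (simp_all add: ann_def)

lemma index_ann: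
  "r < 2 ^ M \<Longrightarrow> c < 2 ^ M \<Longrightarrow> ann M k $$ (r, c) =
     (if bit c k \<and> r = unset_bit k c then (-1) ^ ones_below k c else 0)"
  using unset_bit_add_two_power[of c k] by (auto simp: ann_def occ_iff_bit ones_below_def)

lemma eq_unset_bit_window_iff:
  assumes "i < L"
  shows "r = unset_bit (a + i) c \<longleftrightarrow>
    same_outside a L r c \<and> window a L r = unset_bit i (window a L c)"
proof
  assume r: "r = unset_bit (a + i) c"
  then have "window a L r = unset_bit i (window a L c)"
    by (intro bit_eqI) (auto simp: bit_window bit_unset_bit_iff)
  with r assms show "same_outside a L r c \<and> window a L r = unset_bit i (window a L c)"
    by (auto simp: same_outside_def bit_unset_bit_iff)
next
  assume h: "same_outside a L r c \<and> window a L r = unset_bit i (window a L c)"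
  show "r = unset_bit (a + i) c"
  proof (rule bit_eqI)
    fix l
    show "bit r l = bit (unset_bit (a + i) c) l"
    proof (cases "l < a \<or> a + L \<le> l")
      case True
      then show ?thesis using h assms by (auto simp: same_outside_def bit_unset_bit_iff)
    next
      case False
      then have "bit (window a L r) (l - a) = bit (unset_bit i (window a L c)) (l - a)" "l - a < L"
        using h by auto
      with False show ?thesis by (auto simp: bit_window bit_unset_bit_iff)
    qed
  qed
qed

lemma embed_modes_ann:
  assumes i: "i < L"
  shows "embed_modes a L K (ann L i) = ann K (a + i)"
proof (rule eq_matI)
  fix r c assume "r < dim_row (ann K (a + i))" "c < dim_col (ann K (a + i))"
  then have r: "r < 2 ^ K" and c: "c < 2 ^ K" by auto
  let ?r = "window a L r" and ?c = "window a L c"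
  have bit_c: "bit ?c i \<longleftrightarrow> bit c (a + i)"
    using i by (simp add: bit_window)
  show "embed_modes a L K (ann L i) $$ (r, c) = ann K (a + i) $$ (r, c)"
  proof (cases "bit c (a + i) \<and> r = unset_bit (a + i) c")
    case True
    then have so: "same_outside a L r c" and rc: "?r = unset_bit i ?c" and bc: "bit ?c i"
      using eq_unset_bit_window_iff[OF i] bit_c by auto
    have "ones_below L ?c = Suc (ones_below L ?r)"
      by (rule ones_below_insert_bit[OF i bc]) (auto simp: rc bit_unset_bit_iff)
    then have "jw_sign a L c ?r ?c = (-1) ^ ones_below a c"
      unfolding jw_sign_def minus_one_power_iff by auto
    then have "embed_modes a L K (ann L i) $$ (r, c) = (-1) ^ ones_below i ?c * (-1) ^ ones_below a c"
      using so rc bc index_embed_modes[OF ann_carrier r c]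
        index_ann[OF window_less[of a L r] window_less[of a L c], of i]
      by simp
    also have "\<dots> = ann K (a + i) $$ (r, c)"
      using True index_ann[OF r c] ones_below_add_window[of i L a c] i by (simp add: power_add)
    finally show ?thesis .
  next
    case False
    then show ?thesis
      using eq_unset_bit_window_iff[OF i] bit_c index_embed_modes[OF ann_carrier r c] index_ann[OF r c]
        index_ann[OF window_less[of a L r] window_less[of a L c], of i]
      by auto
  qed
qed auto

section \<open>Annihilation operators generate all matrices\<close>

definition mat_unit :: "nat \<Rightarrow> nat \<Rightarrow> nat \<Rightarrow> complex mat" where
  "mat_unit n r c = mat n n (\<lambda>(i, j). if i = r \<and> j = c then 1 else 0)"

definition empty_below_proj :: "nat \<Rightarrow> nat \<Rightarrow> complex mat" where
  "empty_below_proj n m = mat n n (\<lambda>(i, j). if i = j \<and> (\<forall>l<m. \<not> bit i l) then 1 else 0)"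

lemma mat_unit_carrier [simp]: "mat_unit n r c \<in> carrier_mat n n"
  by (simp add: mat_unit_def)

lemma bit_and_eq_unset_bit_iff:
  "bit (k::nat) m \<and> r = unset_bit m k \<longleftrightarrow> \<not> bit r m \<and> k = set_bit m r"
  by (auto intro!: bit_eqI simp: bit_set_bit_iff bit_unset_bit_iff)

lemma index_ann_mult_adjoint:
  assumes m: "m < L" and r: "r < 2 ^ L" and c: "c < 2 ^ L"
  shows "(ann L m * mat_adjoint (ann L m)) $$ (r, c) = (if r = c \<and> \<not> bit r m then 1 else 0)"
proof -
  have set_bit_less: "set_bit m x < 2 ^ L" if "x < 2 ^ L" for x :: nat
    using that m unfolding less_two_power_iff_bits by (auto simp: bit_set_bit_iff)
  have ann_row: "ann L m $$ (x, k) = (if \<not> bit x m \<and> k = set_bit m x then (-1) ^ ones_below m k else 0)"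
    if "x < 2 ^ L" "k < 2 ^ L" for x k
    using index_ann[OF that, of m] bit_and_eq_unset_bit_iff[of k m x] by auto
  have "(ann L m * mat_adjoint (ann L m)) $$ (r, c) = (\<Sum>k<2 ^ L. ann L m $$ (r, k) * cnj (ann L m $$ (c, k)))"
    using index_mult_mat_sum[OF ann_carrier mat_adjoint_carrier[OF ann_carrier] r c] c
    by (auto intro!: sum.cong)
  also have "\<dots> = (\<Sum>k<2 ^ L. if k = set_bit m r then
      (if \<not> bit r m then (-1) ^ ones_below m k * cnj (ann L m $$ (c, k)) else 0) else 0)"
    by (rule sum.cong) (auto simp: ann_row[OF r])
  also have "\<dots> = (if \<not> bit r m
      then (-1) ^ ones_below m (set_bit m r) * cnj (ann L m $$ (c, set_bit m r)) else 0)"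
    using set_bit_less[OF r] by simp
  also have "\<dots> = (if r = c \<and> \<not> bit r m then 1 else 0)"
    using ann_row[OF c set_bit_less[OF r]] bit_and_eq_unset_bit_iff[of "set_bit m r" m r]
      bit_and_eq_unset_bit_iff[of "set_bit m r" m c]
    by (auto simp flip: power_add)
  finally show ?thesis .
qed

lemma index_diag_mult:
  assumes A: "A \<in> carrier_mat n n" and r: "r < n" and c: "c < n"
  shows "(mat n n (\<lambda>(i, k). if i = k then d i else 0) * A) $$ (r, c) = d r * A $$ (r, c)"
proof -
  have "(mat n n (\<lambda>(i, k). if i = k then d i else 0) * A) $$ (r, c)
      = (\<Sum>k<n. (if r = k then d r else 0) * A $$ (k, c))"
    using index_mult_mat_sum[OF _ A r c, of "mat n n (\<lambda>(i, k). if i = k then d i else 0)"] r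
    by (auto intro!: sum.cong)
  also have "\<dots> = (\<Sum>k<n. if k = r then d r * A $$ (k, c) else 0)"
    by (rule sum.cong) auto
  finally show ?thesis using r by simp
qed

lemma empty_below_proj_0: "empty_below_proj n 0 = 1\<^sub>m n"
  by (rule eq_matI) (auto simp: empty_below_proj_def)

lemma empty_below_proj_Suc:
  assumes m: "m < L"
  shows "empty_below_proj (2 ^ L) (Suc m) = empty_below_proj (2 ^ L) m * (ann L m * mat_adjoint (ann L m))"
proof (rule eq_matI)
  fix r c assume "r < dim_row (empty_below_proj (2 ^ L) m * (ann L m * mat_adjoint (ann L m)))"
    "c < dim_col (empty_below_proj (2 ^ L) m * (ann L m * mat_adjoint (ann L m)))"
  then have r: "r < 2 ^ L" and c: "c < 2 ^ L" by (auto simp: empty_below_proj_def)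
  have diag: "empty_below_proj (2 ^ L) m
      = mat (2 ^ L) (2 ^ L) (\<lambda>(i, k). if i = k then (if \<forall>l<m. \<not> bit i l then 1 else 0) else 0)"
    unfolding empty_below_proj_def by (rule cong[OF refl]) auto
  show "empty_below_proj (2 ^ L) (Suc m) $$ (r, c)
      = (empty_below_proj (2 ^ L) m * (ann L m * mat_adjoint (ann L m))) $$ (r, c)"
    unfolding diag
      index_diag_mult[OF mult_carrier_mat[OF ann_carrier mat_adjoint_carrier[OF ann_carrier]] r c]
      index_ann_mult_adjoint[OF m r c]
    using r c by (auto simp: empty_below_proj_def less_Suc_eq)
qed (auto simp: empty_below_proj_def)

lemma empty_below_proj_all: "empty_below_proj (2 ^ L) L = mat_unit (2 ^ L) 0 0"
proof (rule eq_matI)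
  fix r c assume "r < dim_row (mat_unit (2 ^ L) 0 0)" "c < dim_col (mat_unit (2 ^ L) 0 0)"
  then have r: "r < 2 ^ L" and c: "c < 2 ^ L" by (auto simp: mat_unit_def)
  have "(\<forall>l<L. \<not> bit r l) \<longleftrightarrow> r = 0"
    using r less_two_power_iff_bits[of r L] by (auto intro!: bit_eqI)
  then show "empty_below_proj (2 ^ L) L $$ (r, c) = mat_unit (2 ^ L) 0 0 $$ (r, c)"
    using r c by (auto simp: empty_below_proj_def mat_unit_def)
qed (auto simp: empty_below_proj_def mat_unit_def)

lemma mat_unit_mult_ann:
  assumes k: "bit c k" and c: "c < 2 ^ L"
  shows "mat_unit (2 ^ L) 0 (unset_bit k c) * ann L k = (-1) ^ ones_below k c \<cdot>\<^sub>m mat_unit (2 ^ L) 0 c"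
proof (rule eq_matI)
  fix i j assume "i < dim_row ((-1) ^ ones_below k c \<cdot>\<^sub>m mat_unit (2 ^ L) 0 c)"
    "j < dim_col ((-1) ^ ones_below k c \<cdot>\<^sub>m mat_unit (2 ^ L) 0 c)"
  then have i: "i < 2 ^ L" and j: "j < 2 ^ L" by (auto simp: mat_unit_def)
  let ?c' = "unset_bit k c"
  have c': "?c' < 2 ^ L" using unset_bit_add_two_power[OF k] c by linarith
  have "(mat_unit (2 ^ L) 0 ?c' * ann L k) $$ (i, j)
      = (\<Sum>l<2 ^ L. mat_unit (2 ^ L) 0 ?c' $$ (i, l) * ann L k $$ (l, j))"
    by (rule index_mult_mat_sum[OF mat_unit_carrier ann_carrier i j])
  also have "\<dots> = (\<Sum>l<2 ^ L. if l = ?c' then (if i = 0 then 1 else 0) * ann L k $$ (l, j) else 0)"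
    by (rule sum.cong) (auto simp: mat_unit_def i)
  also have "\<dots> = (if i = 0 then 1 else 0) * ann L k $$ (?c', j)"
    using c' by simp
  also have "\<dots> = ((-1) ^ ones_below k c \<cdot>\<^sub>m mat_unit (2 ^ L) 0 c) $$ (i, j)"
    using index_ann[OF c' j, of k] k i j bit_and_eq_unset_bit_iff[of j k ?c']
    by (auto simp: mat_unit_def bit_unset_bit_iff set_bit_unset_bit_eq)
  finally show "(mat_unit (2 ^ L) 0 ?c' * ann L k) $$ (i, j)
      = ((-1) ^ ones_below k c \<cdot>\<^sub>m mat_unit (2 ^ L) 0 c) $$ (i, j)" .
qed (auto simp: mat_unit_def)

lemma mat_adjoint_mat_unit_mult:
  assumes r: "r < n" and c: "c < n"
  shows "mat_adjoint (mat_unit n 0 r) * mat_unit n 0 c = mat_unit n r c"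
proof (rule eq_matI)
  fix i j assume "i < dim_row (mat_unit n r c)" "j < dim_col (mat_unit n r c)"
  then have i: "i < n" and j: "j < n" by (auto simp: mat_unit_def)
  have "(mat_adjoint (mat_unit n 0 r) * mat_unit n 0 c) $$ (i, j)
      = (\<Sum>l<n. cnj (mat_unit n 0 r $$ (l, i)) * mat_unit n 0 c $$ (l, j))"
    using index_mult_mat_sum[OF mat_adjoint_carrier[OF mat_unit_carrier] mat_unit_carrier i j] i
    by (auto simp: mat_unit_def)
  also have "\<dots> = (\<Sum>l<n. if l = 0 then (if i = r \<and> j = c then 1 else 0) else 0)"
    by (rule sum.cong) (auto simp: mat_unit_def i j)
  finally show "(mat_adjoint (mat_unit n 0 r) * mat_unit n 0 c) $$ (i, j) = mat_unit n r c $$ (i, j)"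
    using i j by (simp add: mat_unit_def)
qed (auto simp: mat_unit_def)

definition unital_star_subalgebra :: "nat \<Rightarrow> complex mat set \<Rightarrow> bool" where
  "unital_star_subalgebra n S \<longleftrightarrow> S \<subseteq> carrier_mat n n \<and> 1\<^sub>m n \<in> S \<and>
     (\<forall>A\<in>S. \<forall>B\<in>S. A + B \<in> S \<and> A * B \<in> S) \<and> (\<forall>x. \<forall>A\<in>S. x \<cdot>\<^sub>m A \<in> S) \<and>
     (\<forall>A\<in>S. mat_adjoint A \<in> S)"

text \<open>The product of the \<open>ann L m * mat_adjoint (ann L m)\<close> is the projector onto the vacuum,
  right multiplication by annihilation operators turns it into every matrix unit \<open>mat_unit _ 0 c\<close>,
  and \<open>mat_unit _ r c = mat_adjoint (mat_unit _ 0 r) * mat_unit _ 0 c\<close>.\<close>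

locale ann_star_subalgebra =
  fixes L :: nat and S :: "complex mat set"
  assumes subalgebra: "unital_star_subalgebra (2 ^ L) S"
    and ann_mem: "\<And>i. i < L \<Longrightarrow> ann L i \<in> S"
begin

lemma one_mem: "1\<^sub>m (2 ^ L) \<in> S"
  and add_mem: "A \<in> S \<Longrightarrow> B \<in> S \<Longrightarrow> A + B \<in> S"
  and mult_mem: "A \<in> S \<Longrightarrow> B \<in> S \<Longrightarrow> A * B \<in> S"
  and smult_mem: "A \<in> S \<Longrightarrow> x \<cdot>\<^sub>m A \<in> S"
  and adjoint_mem: "A \<in> S \<Longrightarrow> mat_adjoint A \<in> S"
  using subalgebra by (auto simp: unital_star_subalgebra_def)

lemma empty_below_proj_mem: "m \<le> L \<Longrightarrow> empty_below_proj (2 ^ L) m \<in> S"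
proof (induction m)
  case 0 then show ?case by (simp add: empty_below_proj_0 one_mem)
next
  case (Suc m)
  then show ?case by (simp add: empty_below_proj_Suc mult_mem ann_mem adjoint_mem)
qed

lemma mat_unit_0_mem: "c < 2 ^ L \<Longrightarrow> mat_unit (2 ^ L) 0 c \<in> S"
proof (induction c rule: less_induct)
  case (less c)
  show ?case
  proof (cases "c = 0")
    case True
    then show ?thesis using empty_below_proj_mem[of L] by (simp add: empty_below_proj_all)
  next
    case False
    then obtain k where k: "bit c k" using bit_eqI[of c 0] by auto
    have "k < L" using bit_less_if_less_two_power[OF less.prems k] .
    moreover have "unset_bit k c < c"
      using unset_bit_add_two_power[OF k] less_add_same_cancel1[of "unset_bit k c" "2 ^ k"] by simp
    ultimately have "(-1) ^ ones_below k c \<cdot>\<^sub>m (mat_unit (2 ^ L) 0 (unset_bit k c) * ann L k) \<in> S"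
      using less by (simp add: smult_mem mult_mem ann_mem)
    moreover have "(-1) ^ ones_below k c \<cdot>\<^sub>m (mat_unit (2 ^ L) 0 (unset_bit k c) * ann L k)
        = mat_unit (2 ^ L) 0 c"
      unfolding mat_unit_mult_ann[OF k less.prems]
      by (rule eq_matI) (auto simp flip: power_mult_distrib)
    ultimately show ?thesis by simp
  qed
qed

lemma mat_unit_mem: "r < 2 ^ L \<Longrightarrow> c < 2 ^ L \<Longrightarrow> mat_unit (2 ^ L) r c \<in> S"
  by (metis mat_adjoint_mat_unit_mult mat_unit_0_mem mult_mem adjoint_mem)

lemma carrier_mat_subset: "carrier_mat (2 ^ L) (2 ^ L) \<subseteq> S"
proof
  fix A :: "complex mat" assume A: "A \<in> carrier_mat (2 ^ L) (2 ^ L)"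
  define part where "part I = mat (2 ^ L) (2 ^ L) (\<lambda>ij. if ij \<in> I then A $$ ij else 0)" for I
  have "part I \<in> S" if "finite I" "I \<subseteq> {..<2 ^ L} \<times> {..<2 ^ L}" for I
    using that
  proof (induction I rule: finite_induct)
    case empty
    have "part {} = 0 \<cdot>\<^sub>m 1\<^sub>m (2 ^ L)" by (rule eq_matI) (auto simp: part_def)
    then show ?case using smult_mem[OF one_mem] by simp
  next
    case (insert ij I)
    obtain i j where ij: "ij = (i, j)" "i < 2 ^ L" "j < 2 ^ L" using insert.prems by auto
    have "part (insert ij I) = part I + A $$ (i, j) \<cdot>\<^sub>m mat_unit (2 ^ L) i j"
      by (rule eq_matI) (use insert.hyps(2) ij in \<open>auto simp: part_def mat_unit_def\<close>)
    then show ?case using insert ij by (simp add: add_mem smult_mem mat_unit_mem)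
  qed
  moreover have "part ({..<2 ^ L} \<times> {..<2 ^ L}) = A"
    by (rule eq_matI) (use A in \<open>auto simp: part_def\<close>)
  ultimately show "A \<in> S" by (metis finite_SigmaI finite_lessThan order_refl)
qed

end

lemma unital_star_hom_eqI:
  assumes \<phi>: "unital_star_hom (2 ^ L) m \<phi>" and \<psi>: "unital_star_hom (2 ^ L) m \<psi>"
    and ann: "\<And>i. i < L \<Longrightarrow> \<phi> (ann L i) = \<psi> (ann L i)"
    and A: "A \<in> carrier_mat (2 ^ L) (2 ^ L)"
  shows "\<phi> A = \<psi> A"
proof -
  have "ann_star_subalgebra L {A \<in> carrier_mat (2 ^ L) (2 ^ L). \<phi> A = \<psi> A}"
    using \<phi> \<psi> ann by unfold_locales (auto simp: unital_star_subalgebra_def unital_star_hom_def)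
  then show ?thesis using ann_star_subalgebra.carrier_mat_subset A by blast
qed

lemma slice_window_le: "(t::nat) < N \<Longrightarrow> t * L + L \<le> N * L"
  using mult_le_mono1[of "Suc t" N L] by simp

text \<open>\<open>slice\<close> is defined by a description; the explicit embedding satisfies it, and uniquely so
  by \<open>unital_star_hom_eqI\<close>.\<close>

lemma slice_eq_embed_modes:
  assumes t: "t < N"
  shows "slice L N t = embed_modes (t * L) L (N * L)"
proof -
  note window = slice_window_le[OF t, of L]
  show ?thesis
    unfolding slice_def
  proof (rule the_equality)
    show "unital_star_hom (2 ^ L) (2 ^ (N * L)) (embed_modes (t * L) L (N * L)) \<and>
        (\<forall>i<L. embed_modes (t * L) L (N * L) (ann L i) = ann (N * L) (t * L + i)) \<and>
        (\<forall>A. A \<notin> carrier_mat (2 ^ L) (2 ^ L) \<longrightarrow>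
          embed_modes (t * L) L (N * L) A = 0\<^sub>m (2 ^ (N * L)) (2 ^ (N * L)))"
      using embed_modes_unital_star_hom[OF window] embed_modes_ann by (auto simp: embed_modes_def)
    fix \<psi>
    assume \<psi>: "unital_star_hom (2 ^ L) (2 ^ (N * L)) \<psi> \<and>
        (\<forall>i<L. \<psi> (ann L i) = ann (N * L) (t * L + i)) \<and>
        (\<forall>A. A \<notin> carrier_mat (2 ^ L) (2 ^ L) \<longrightarrow> \<psi> A = 0\<^sub>m (2 ^ (N * L)) (2 ^ (N * L)))"
    show "\<psi> = embed_modes (t * L) L (N * L)"
    proof
      fix A
      show "\<psi> A = embed_modes (t * L) L (N * L) A"
        using \<psi> unital_star_hom_eqI[OF _ embed_modes_unital_star_hom[OF window], of \<psi> A]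
          embed_modes_ann
        by (cases "A \<in> carrier_mat (2 ^ L) (2 ^ L)") (auto simp: embed_modes_def)
    qed
  qed
qed

section \<open>Fermionic parity\<close>

lemma mprod_Nil [simp]: "mprod n [] = 1\<^sub>m n"
  and mprod_Cons [simp]: "mprod n (A # As) = A * mprod n As"
  by (simp_all add: mprod_def)

lemma mprod_carrier: "(\<And>A. A \<in> set As \<Longrightarrow> A \<in> carrier_mat n n) \<Longrightarrow> mprod n As \<in> carrier_mat n n"
  by (induction As) (auto intro!: mult_carrier_mat)

definition parity_homogeneous :: "nat \<Rightarrow> bool \<Rightarrow> complex mat \<Rightarrow> bool" where
  "parity_homogeneous M p A \<longleftrightarrow> (\<forall>r c. r < 2 ^ M \<longrightarrow> c < 2 ^ M \<longrightarrow>
     odd (ones_below M r + ones_below M c) \<noteq> p \<longrightarrow> A $$ (r, c) = 0)"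

lemma parity_homogeneousD:
  "parity_homogeneous M p A \<Longrightarrow> r < 2 ^ M \<Longrightarrow> c < 2 ^ M \<Longrightarrow> A $$ (r, c) \<noteq> 0 \<Longrightarrow>
     odd (ones_below M r + ones_below M c) = p"
  unfolding parity_homogeneous_def by blast

lemma parity_homogeneous_add:
  "B \<in> carrier_mat (2 ^ M) (2 ^ M) \<Longrightarrow> parity_homogeneous M p A \<Longrightarrow> parity_homogeneous M p B \<Longrightarrow>
   parity_homogeneous M p (A + B)"
  unfolding parity_homogeneous_def by auto

lemma parity_homogeneous_smult:
  "A \<in> carrier_mat (2 ^ M) (2 ^ M) \<Longrightarrow> parity_homogeneous M p A \<Longrightarrow> parity_homogeneous M p (x \<cdot>\<^sub>m A)"
  unfolding parity_homogeneous_def by auto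

lemma parity_homogeneous_zero: "parity_homogeneous M p (0\<^sub>m (2 ^ M) (2 ^ M))"
  unfolding parity_homogeneous_def by auto

lemma parity_homogeneous_one: "parity_homogeneous M False (1\<^sub>m (2 ^ M))"
  unfolding parity_homogeneous_def by auto

lemma parity_homogeneous_adjoint:
  "A \<in> carrier_mat (2 ^ M) (2 ^ M) \<Longrightarrow> parity_homogeneous M p A \<Longrightarrow> parity_homogeneous M p (mat_adjoint A)"
  unfolding parity_homogeneous_def by (auto simp: add.commute)

lemma parity_homogeneous_mult:
  assumes A: "A \<in> carrier_mat (2 ^ M) (2 ^ M)" and B: "B \<in> carrier_mat (2 ^ M) (2 ^ M)"
    and "parity_homogeneous M p A" "parity_homogeneous M q B"
  shows "parity_homogeneous M (p \<noteq> q) (A * B)"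
  unfolding parity_homogeneous_def
proof (intro allI impI)
  fix r c assume r: "r < 2 ^ M" and c: "c < 2 ^ M" and rc: "odd (ones_below M r + ones_below M c) \<noteq> (p \<noteq> q)"
  have "A $$ (r, k) * B $$ (k, c) = 0" if "k < 2 ^ M" for k
    using assms(3,4) r c rc that parity_homogeneousD[of M p A r k] parity_homogeneousD[of M q B k c]
    by fastforce
  then show "(A * B) $$ (r, c) = 0"
    using index_mult_mat_sum[OF A B r c] by (simp add: sum.neutral)
qed

lemma parity_homogeneous_ann: "parity_homogeneous M True (ann M k)"
  unfolding parity_homogeneous_def
proof (intro allI impI)
  fix r c assume r: "r < 2 ^ M" and c: "c < 2 ^ M" and rc: "odd (ones_below M r + ones_below M c) \<noteq> True"
  show "ann M k $$ (r, c) = 0"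
  proof (rule ccontr)
    assume "ann M k $$ (r, c) \<noteq> 0"
    then have k: "bit c k" and r_eq: "r = unset_bit k c"
      using index_ann[OF r c] by (auto split: if_splits)
    have "ones_below M c = Suc (ones_below M r)"
      using ones_below_insert_bit[OF bit_less_if_less_two_power[OF c k] k, of r] r_eq
      by (auto simp: bit_unset_bit_iff)
    with rc show False by simp
  qed
qed

lemma parity_homogeneous_ladder_word:
  assumes "set w \<subseteq> ladder_ops M"
  shows "parity_homogeneous M (odd (length w)) (mprod (2 ^ M) w)"
  using assms
proof (induction w)
  case Nil then show ?case by (simp add: parity_homogeneous_one)
next
  case (Cons x w)
  then have x: "x \<in> carrier_mat (2 ^ M) (2 ^ M)" "parity_homogeneous M True x"
    using parity_homogeneous_ann parity_homogeneous_adjoint[OF ann_carrier] by (auto simp: ladder_ops_def)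
  have "mprod (2 ^ M) w \<in> carrier_mat (2 ^ M) (2 ^ M)"
    using Cons.prems by (intro mprod_carrier) (auto simp: ladder_ops_def)
  from parity_homogeneous_mult[OF x(1) this x(2)] show ?case using Cons by force
qed

lemma parity_preserving_imp_even:
  assumes "parity_preserving M H"
  shows "parity_homogeneous M False H"
proof -
  obtain ws :: "(complex \<times> complex mat list) list" where
    ws: "\<forall>(c, w) \<in> set ws. even (length w) \<and> set w \<subseteq> ladder_ops M"
    and H: "H = foldr (\<lambda>(c, w) S. c \<cdot>\<^sub>m mprod (2 ^ M) w + S) ws (0\<^sub>m (2 ^ M) (2 ^ M))"
    using assms unfolding parity_preserving_def by blast
  let ?sum = "\<lambda>ws. foldr (\<lambda>(c, w) S. c \<cdot>\<^sub>m mprod (2 ^ M) w + S) ws (0\<^sub>m (2 ^ M) (2 ^ M))"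
  have word: "mprod (2 ^ M) w \<in> carrier_mat (2 ^ M) (2 ^ M)" if "set w \<subseteq> ladder_ops M" for w
    using that by (intro mprod_carrier) (auto simp: ladder_ops_def)
  from ws have "?sum ws \<in> carrier_mat (2 ^ M) (2 ^ M) \<and> parity_homogeneous M False (?sum ws)"
  proof (induction ws)
    case Nil then show ?case by (simp add: parity_homogeneous_zero)
  next
    case (Cons cw ws)
    obtain c w where cw: "cw = (c, w)" by (cases cw)
    then have "even (length w)" "set w \<subseteq> ladder_ops M" using Cons.prems by auto
    then show ?case
      using Cons word parity_homogeneous_ladder_word[of w M] cw
      by (auto intro!: parity_homogeneous_add parity_homogeneous_smult)
  qed
  then show ?thesis using H by simp
qed

section \<open>Operators on disjoint windows\<close>

lemma even_entry_mult_jw_sign: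
  assumes "parity_homogeneous L False X" "x < 2 ^ L" "y < 2 ^ L"
  shows "X $$ (x, y) * jw_sign a L c x y = X $$ (x, y)"
  using assms unfolding parity_homogeneous_def jw_sign_def minus_one_power_iff by auto

definition same_outside_both :: "nat \<Rightarrow> nat \<Rightarrow> nat \<Rightarrow> nat \<Rightarrow> nat \<Rightarrow> bool" where
  "same_outside_both a b L r c \<longleftrightarrow>
     (\<forall>l. (l < a \<or> a + L \<le> l) \<and> (l < b \<or> b + L \<le> l) \<longrightarrow> bit r l = bit c l)"

lemma same_outside_both_commute: "same_outside_both a b L r c = same_outside_both b a L r c"
  unfolding same_outside_both_def by blast

lemma window_set_window_disjoint:
  assumes "a + L \<le> b \<or> b + L \<le> a" and j: "j < 2 ^ L"
  shows "window b L (set_window a L r j) = window b L r"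
  using assms by (auto intro!: bit_eqI simp: bit_window bit_set_window[OF j])

lemma same_outside_set_window_disjoint_iff:
  assumes d: "a + L \<le> b \<or> b + L \<le> a" and j: "j < 2 ^ L"
  shows "same_outside b L (set_window a L r j) c \<longleftrightarrow> j = window a L c \<and> same_outside_both a b L r c"
proof
  assume h: "same_outside b L (set_window a L r j) c"
  have "j = window a L c"
  proof (rule bit_eqI)
    fix l
    show "bit j l = bit (window a L c) l"
    proof (cases "l < L")
      case True
      then have "bit (set_window a L r j) (a + l) = bit c (a + l)"
        using h d unfolding same_outside_def by auto
      then show ?thesis using True by (simp add: bit_set_window[OF j] bit_window)
    next
      case False then show ?thesis using bit_less_if_less_two_power[OF j] by (auto simp: bit_window)
    qed
  qed
  moreover have "same_outside_both a b L r c"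
    using h unfolding same_outside_both_def same_outside_def by (auto simp: bit_set_window[OF j])
  ultimately show "j = window a L c \<and> same_outside_both a b L r c" ..
next
  assume h: "j = window a L c \<and> same_outside_both a b L r c"
  then have in_window: "bit j (l - a) = bit c l" if "a \<le> l" "l < a + L" for l
    using that by (auto simp: bit_window)
  show "same_outside b L (set_window a L r j) c"
    unfolding same_outside_def
  proof (intro allI impI)
    fix l assume "l < b \<or> b + L \<le> l"
    then show "bit (set_window a L r j) l = bit c l"
      using conjunct2[OF h] d in_window[of l] by (auto simp: bit_set_window[OF j] same_outside_both_def)
  qed
qed

lemma index_embed_modes_set_window_disjoint:
  assumes d: "a + L \<le> b \<or> b + L \<le> a" and aK: "a + L \<le> K"
    and Y: "Y \<in> carrier_mat (2 ^ L) (2 ^ L)" and r: "r < 2 ^ K" and c: "c < 2 ^ K" and j: "j < 2 ^ L"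
  shows "embed_modes b L K Y $$ (set_window a L r j, c) =
    (if j = window a L c \<and> same_outside_both a b L r c
     then Y $$ (window b L r, window b L c) * jw_sign b L c (window b L r) (window b L c) else 0)"
  using index_embed_modes[OF Y set_window_less[OF r j aK] c] same_outside_set_window_disjoint_iff[OF d j]
    window_set_window_disjoint[OF d j]
  by auto

lemma ones_below_parity_eq:
  assumes d: "a + L \<le> b \<or> b + L \<le> a" and so: "same_outside_both a b L r c"
    and window_parity: "even (ones_below L (window a L r) + ones_below L (window a L c))"
  shows "even (ones_below b r) = even (ones_below b c)"
proof (cases "a + L \<le> b")
  case True
  have split: "ones_below b x = ones_below (a + L) x + card {l. a + L \<le> l \<and> l < b \<and> bit x l}" for x
  proof -
    have "{l. l < b \<and> bit x l} = {l. l < a + L \<and> bit x l} \<union> {l. a + L \<le> l \<and> l < b \<and> bit x l}"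
      using True by auto
    moreover have "card ({l. l < a + L \<and> bit x l} \<union> {l. a + L \<le> l \<and> l < b \<and> bit x l})
        = card {l. l < a + L \<and> bit x l} + card {l. a + L \<le> l \<and> l < b \<and> bit x l}"
      by (rule card_Un_disjoint) auto
    ultimately show ?thesis unfolding ones_below_def by simp
  qed
  have "ones_below a r = ones_below a c"
    unfolding ones_below_def by (rule arg_cong[where f=card]) (use so True in \<open>auto simp: same_outside_both_def\<close>)
  moreover have "{l. a + L \<le> l \<and> l < b \<and> bit r l} = {l. a + L \<le> l \<and> l < b \<and> bit c l}"
    using so unfolding same_outside_both_def by auto
  ultimately show ?thesis
    using split[of r] split[of c] ones_below_add_window[of L L a r] ones_below_add_window[of L L a c]
      window_parity
    by auto
next
  case False
  then have "ones_below b r = ones_below b c"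
    unfolding ones_below_def using d so by (intro arg_cong[where f=card]) (auto simp: same_outside_both_def)
  then show ?thesis by simp
qed

lemma jw_sign_even_entry_disjoint:
  assumes "a + L \<le> b \<or> b + L \<le> a" "same_outside_both a b L r c"
    and "parity_homogeneous L False X" "X $$ (window a L r, window a L c) \<noteq> 0"
  shows "jw_sign b L r x y = jw_sign b L c x y"
proof -
  have "even (ones_below L (window a L r) + ones_below L (window a L c))"
    using parity_homogeneousD[OF assms(3) window_less window_less assms(4)] by simp
  then show ?thesis by (intro jw_sign_cong ones_below_parity_eq[OF assms(1,2)])
qed

lemma embed_modes_commute:
  assumes d: "a + L \<le> b \<or> b + L \<le> a" and aK: "a + L \<le> K" and bK: "b + L \<le> K"
    and X: "X \<in> carrier_mat (2 ^ L) (2 ^ L)" and Y: "Y \<in> carrier_mat (2 ^ L) (2 ^ L)"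
    and even: "parity_homogeneous L False X"
  shows "embed_modes a L K X * embed_modes b L K Y = embed_modes b L K Y * embed_modes a L K X"
proof (rule eq_matI)
  fix r c assume "r < dim_row (embed_modes b L K Y * embed_modes a L K X)"
    "c < dim_col (embed_modes b L K Y * embed_modes a L K X)"
  then have r: "r < 2 ^ K" and c: "c < 2 ^ K" by auto
  have d': "b + L \<le> a \<or> a + L \<le> b" using d by auto
  let ?Xrc = "X $$ (window a L r, window a L c)" and ?Yrc = "Y $$ (window b L r, window b L c)"
  let ?so = "same_outside_both a b L r c"
  have "(embed_modes a L K X * embed_modes b L K Y) $$ (r, c)
      = (\<Sum>j<2 ^ L. if j = window a L c then
          (if ?so then X $$ (window a L r, j) * ?Yrc * jw_sign b L c (window b L r) (window b L c) else 0) else 0)"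
    unfolding index_embed_modes_mult[OF X embed_modes_carrier r c aK]
    by (rule sum.cong)
      (auto simp: index_embed_modes_set_window_disjoint[OF d aK Y r c] even_entry_mult_jw_sign[OF even] window_less)
  also have "\<dots> = (if ?so then ?Xrc * ?Yrc * jw_sign b L c (window b L r) (window b L c) else 0)"
    by (simp add: window_less)
  finally have XY: "(embed_modes a L K X * embed_modes b L K Y) $$ (r, c)
      = (if ?so then ?Xrc * ?Yrc * jw_sign b L c (window b L r) (window b L c) else 0)" .
  have "(embed_modes b L K Y * embed_modes a L K X) $$ (r, c)
      = (\<Sum>j<2 ^ L. if j = window b L c then (if ?so then Y $$ (window b L r, j)
          * jw_sign b L (set_window b L r j) (window b L r) j * ?Xrc else 0) else 0)"
    unfolding index_embed_modes_mult[OF Y embed_modes_carrier r c bK]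
    by (rule sum.cong)
      (auto simp: index_embed_modes_set_window_disjoint[OF d' bK X r c] even_entry_mult_jw_sign[OF even]
        window_less same_outside_both_commute)
  also have "\<dots> = (if ?so then ?Yrc * jw_sign b L r (window b L r) (window b L c) * ?Xrc else 0)"
    using jw_sign_same_outside[OF same_outside_sym[OF same_outside_set_window[OF window_less]]]
    by (simp add: window_less)
  finally have YX: "(embed_modes b L K Y * embed_modes a L K X) $$ (r, c)
      = (if ?so then ?Yrc * jw_sign b L r (window b L r) (window b L c) * ?Xrc else 0)" .
  have "jw_sign b L r (window b L r) (window b L c) = jw_sign b L c (window b L r) (window b L c)"
    if "?so" and "?Xrc \<noteq> 0"
    using jw_sign_even_entry_disjoint[OF d that(1) even that(2)] .
  then show "(embed_modes a L K X * embed_modes b L K Y) $$ (r, c)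
      = (embed_modes b L K Y * embed_modes a L K X) $$ (r, c)"
    unfolding XY YX by auto
qed auto

section \<open>The matrix exponential\<close>

lemma mexp_carrier: "B \<in> carrier_mat n n \<Longrightarrow> mexp B \<in> carrier_mat n n"
  by (simp add: mexp_def)

lemma index_mexp:
  "B \<in> carrier_mat n n \<Longrightarrow> i < n \<Longrightarrow> j < n \<Longrightarrow>
   mexp B $$ (i, j) = (\<Sum>k. (B ^\<^sub>m k) $$ (i, j) / of_nat (fact k))"
  by (simp add: mexp_def)

lemma norm_index_pow_mat_le:
  fixes B :: "complex mat"
  assumes B: "B \<in> carrier_mat n n" and C: "\<And>i j. i < n \<Longrightarrow> j < n \<Longrightarrow> norm (B $$ (i, j)) \<le> C"
  shows "i < n \<Longrightarrow> j < n \<Longrightarrow> norm ((B ^\<^sub>m k) $$ (i, j)) \<le> (real n * C) ^ k"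
proof (induction k arbitrary: i j)
  case 0 then show ?case using B by simp
next
  case (Suc k)
  have C0: "0 \<le> C" using C[OF Suc.prems(1) Suc.prems(1)] norm_ge_zero order_trans by blast
  have "norm ((B ^\<^sub>m Suc k) $$ (i, j)) \<le> (\<Sum>l<n. norm ((B ^\<^sub>m k) $$ (i, l)) * norm (B $$ (l, j)))"
    using index_mult_mat_sum[OF pow_carrier_mat[OF B] B Suc.prems]
    by (simp add: norm_sum[THEN order_trans] norm_mult)
  also have "\<dots> \<le> (\<Sum>l<n. (real n * C) ^ k * C)"
    by (rule sum_mono) (use Suc C C0 in \<open>auto intro!: mult_mono\<close>)
  also have "\<dots> = (real n * C) ^ Suc k" by (simp add: algebra_simps)
  finally show ?case .
qed

lemma summable_index_mexp:
  fixes B :: "complex mat"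
  assumes B: "B \<in> carrier_mat n n" and i: "i < n" and j: "j < n"
  shows "summable (\<lambda>k. (B ^\<^sub>m k) $$ (i, j) / of_nat (fact k))"
proof -
  define C where "C = (\<Sum>p<n. \<Sum>q<n. norm (B $$ (p, q)))"
  have C: "norm (B $$ (p, q)) \<le> C" if "p < n" "q < n" for p q
  proof -
    have "norm (B $$ (p, q)) \<le> (\<Sum>q<n. norm (B $$ (p, q)))"
      by (rule member_le_sum) (use that in auto)
    also have "\<dots> \<le> C" unfolding C_def
      by (rule member_le_sum[where f="\<lambda>p. \<Sum>q<n. norm (B $$ (p, q))"]) (use that in \<open>auto intro: sum_nonneg\<close>)
    finally show ?thesis .
  qed
  show ?thesis
  proof (rule summable_comparison_test'[OF summable_exp[of "real n * C"]])
    fix k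
    show "norm ((B ^\<^sub>m k) $$ (i, j) / of_nat (fact k)) \<le> inverse (fact k) * (real n * C) ^ k"
      using divide_right_mono[OF norm_index_pow_mat_le[OF B C i j, of k], of "fact k"]
      by (simp add: norm_divide field_simps)
  qed
qed

lemma mat_adjoint_mexp:
  assumes B: "B \<in> carrier_mat n n"
  shows "mat_adjoint (mexp B) = mexp (mat_adjoint B)"
proof (rule eq_matI)
  fix i j assume "i < dim_row (mexp (mat_adjoint B))" "j < dim_col (mexp (mat_adjoint B))"
  then have i: "i < n" and j: "j < n" using B by (auto simp: mexp_def)
  have "(\<lambda>k. (B ^\<^sub>m k) $$ (j, i) / of_nat (fact k)) sums mexp B $$ (j, i)"
    using summable_index_mexp[OF B j i] by (simp add: index_mexp[OF B j i] summable_sums)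
  then have "(\<lambda>k. cnj ((B ^\<^sub>m k) $$ (j, i) / of_nat (fact k))) sums cnj (mexp B $$ (j, i))"
    by (simp only: sums_cnj)
  moreover have "cnj ((B ^\<^sub>m k) $$ (j, i) / of_nat (fact k))
      = (mat_adjoint B ^\<^sub>m k) $$ (i, j) / of_nat (fact k)" for k
    using B i j by (simp add: mat_adjoint_pow[OF B, symmetric])
  ultimately show "mat_adjoint (mexp B) $$ (i, j) = mexp (mat_adjoint B) $$ (i, j)"
    using B i j mexp_carrier[OF B] by (simp add: index_mexp[OF mat_adjoint_carrier[OF B] i j] sums_iff)
qed (use B in \<open>auto simp: mexp_def\<close>)

lemma parity_homogeneous_pow:
  assumes "B \<in> carrier_mat (2 ^ L) (2 ^ L)" "parity_homogeneous L False B"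
  shows "parity_homogeneous L False (B ^\<^sub>m k)"
  using assms
proof (induction k)
  case (Suc k)
  then show ?case using parity_homogeneous_mult[OF pow_carrier_mat[of B] _ Suc.IH] by simp
qed (simp add: parity_homogeneous_one)

lemma parity_homogeneous_mexp:
  assumes B: "B \<in> carrier_mat (2 ^ L) (2 ^ L)" and even: "parity_homogeneous L False B"
  shows "parity_homogeneous L False (mexp B)"
  using parity_homogeneous_pow[OF B even] by (auto simp: parity_homogeneous_def index_mexp[OF B])

lemma embed_modes_pow:
  assumes B: "B \<in> carrier_mat (2 ^ L) (2 ^ L)" and aLK: "a + L \<le> K"
  shows "embed_modes a L K (B ^\<^sub>m k) = embed_modes a L K B ^\<^sub>m k"
  using B by (induction k) (simp_all add: embed_modes_one embed_modes_mult[OF pow_carrier_mat[OF B] B aLK])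

lemma mexp_embed_modes:
  assumes B: "B \<in> carrier_mat (2 ^ L) (2 ^ L)" and aLK: "a + L \<le> K"
  shows "mexp (embed_modes a L K B) = embed_modes a L K (mexp B)"
proof (rule eq_matI)
  fix r c assume "r < dim_row (embed_modes a L K (mexp B))" "c < dim_col (embed_modes a L K (mexp B))"
  then have r: "r < 2 ^ K" and c: "c < 2 ^ K" by auto
  let ?r = "window a L r" and ?c = "window a L c"
  have "mexp (embed_modes a L K B) $$ (r, c) = (if same_outside a L r c
      then (\<Sum>k. (B ^\<^sub>m k) $$ (?r, ?c) / of_nat (fact k) * jw_sign a L c ?r ?c) else 0)"
    unfolding index_mexp[OF embed_modes_carrier r c] embed_modes_pow[OF B aLK, symmetric]
    by (simp add: index_embed_modes[OF pow_carrier_mat[OF B] r c])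
  also have "\<dots> = embed_modes a L K (mexp B) $$ (r, c)"
    using suminf_mult2[OF summable_index_mexp[OF B window_less window_less], where c = "jw_sign a L c ?r ?c"]
    by (simp add: index_embed_modes[OF mexp_carrier[OF B] r c] index_mexp[OF B window_less window_less])
  finally show "mexp (embed_modes a L K B) $$ (r, c) = embed_modes a L K (mexp B) $$ (r, c)" .
qed (auto simp: mexp_def)

lemma mult_carrier_square: "A \<in> carrier_mat n n \<Longrightarrow> B \<in> carrier_mat n n \<Longrightarrow> A * B \<in> carrier_mat n n"
  by simp

lemma assoc_mult_square:
  "A \<in> carrier_mat n n \<Longrightarrow> B \<in> carrier_mat n n \<Longrightarrow> C \<in> carrier_mat n n \<Longrightarrow>
   (A :: complex mat) * B * C = A * (B * C)"
  by (rule assoc_mult_mat)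

lemma mult_commute_mult:
  assumes "(X :: complex mat) \<in> carrier_mat n n" "Y \<in> carrier_mat n n" "Z \<in> carrier_mat n n"
    and "X * Y = Y * X" "X * Z = Z * X"
  shows "X * (Y * Z) = (Y * Z) * X"
  using assms(4,5) assoc_mult_mat[OF assms(1,2,3)] assoc_mult_mat[OF assms(2,1,3)]
    assoc_mult_mat[OF assms(2,3,1)]
  by simp

lemma mult_commute_mult3:
  assumes "(X :: complex mat) \<in> carrier_mat n n" "Y \<in> carrier_mat n n" "Z \<in> carrier_mat n n"
    "W \<in> carrier_mat n n" "X * Y = Y * X" "X * Z = Z * X" "X * W = W * X"
  shows "X * (Y * Z * W) = Y * Z * W * X"
  using assms mult_commute_mult[OF assms(1) mult_carrier_square[OF assms(2,3)] assms(4)]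
    mult_commute_mult[OF assms(1-3)] by simp

lemma mult_commute_mprod:
  assumes X: "(X :: complex mat) \<in> carrier_mat n n"
    and Ys: "\<And>Y. Y \<in> set Ys \<Longrightarrow> Y \<in> carrier_mat n n \<and> X * Y = Y * X"
  shows "X * mprod n Ys = mprod n Ys * X"
  using Ys
proof (induction Ys)
  case Nil then show ?case using X by simp
next
  case (Cons Y Ys)
  have "Y \<in> carrier_mat n n" "X * Y = Y * X" "mprod n Ys \<in> carrier_mat n n"
    using Cons.prems by (auto intro: mprod_carrier)
  moreover have "X * mprod n Ys = mprod n Ys * X"
    by (rule Cons.IH) (use Cons.prems in simp)
  ultimately show ?case using mult_commute_mult[OF X] by simp
qed

lemma mprod_append:
  assumes "\<And>A. A \<in> set As \<Longrightarrow> A \<in> carrier_mat n n" "\<And>B. B \<in> set Bs \<Longrightarrow> (B :: complex mat) \<in> carrier_mat n n"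
  shows "mprod n (As @ Bs) = mprod n As * mprod n Bs"
  using assms
proof (induction As)
  case Nil then show ?case using mprod_carrier[of Bs n] by simp
next
  case (Cons A As)
  have car: "A \<in> carrier_mat n n" "mprod n As \<in> carrier_mat n n" "mprod n Bs \<in> carrier_mat n n"
    using Cons.prems by (auto intro: mprod_carrier)
  have "mprod n (As @ Bs) = mprod n As * mprod n Bs"
    by (rule Cons.IH) (use Cons.prems in auto)
  then show ?case using assoc_mult_square[OF car] by simp
qed

lemma mat_adjoint_mprod:
  assumes "\<And>A. A \<in> set As \<Longrightarrow> (A :: complex mat) \<in> carrier_mat n n"
  shows "mat_adjoint (mprod n As) = mprod n (rev (map mat_adjoint As))"
  using assms
proof (induction As)
  case Nil then show ?case by (simp add: mat_adjoint_one)
next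
  case (Cons A As)
  have A: "A \<in> carrier_mat n n" and As: "mprod n As \<in> carrier_mat n n"
    using Cons.prems by (auto intro: mprod_carrier)
  have "mat_adjoint (mprod n As) = mprod n (rev (map mat_adjoint As))"
    by (rule Cons.IH) (use Cons.prems in auto)
  then have "mat_adjoint (mprod n (A # As)) = mprod n (rev (map mat_adjoint As)) * mat_adjoint A"
    by (simp add: mat_adjoint_mult[OF A As])
  also have "\<dots> = mprod n (rev (map mat_adjoint As)) * mprod n [mat_adjoint A]"
    using right_mult_one_mat[OF mat_adjoint_carrier[OF A]] by simp
  also have "\<dots> = mprod n (rev (map mat_adjoint As) @ [mat_adjoint A])"
  proof (rule mprod_append[symmetric])
    show "B \<in> carrier_mat n n" if "B \<in> set (rev (map mat_adjoint As))" for B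
      using that Cons.prems mat_adjoint_carrier by fastforce
    show "B \<in> carrier_mat n n" if "B \<in> set [mat_adjoint A]" for B
      using that A by simp
  qed
  finally show ?case by simp
qed

lemma mult_sandwich_commute:
  fixes A B C E P F W :: "complex mat"
  assumes car: "A \<in> carrier_mat n n" "B \<in> carrier_mat n n" "C \<in> carrier_mat n n"
      "E \<in> carrier_mat n n" "P \<in> carrier_mat n n" "F \<in> carrier_mat n n" "W \<in> carrier_mat n n"
    and EB: "E * B = B * E" and CW: "C * W = W * C" and EPF: "E * P * F = W"
  shows "A * E * (B * P) * (F * C) = A * B * C * W"
proof -
  have "A * E * (B * P) * (F * C) = A * ((E * B) * (P * (F * C)))"
    using car by (simp add: assoc_mult_square mult_carrier_square)
  also have "\<dots> = A * (B * ((E * P * F) * C))"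
    using car by (simp add: EB assoc_mult_square mult_carrier_square)
  also have "\<dots> = A * B * C * W"
    using car by (simp add: EPF CW assoc_mult_square mult_carrier_square)
  finally show ?thesis .
qed

lemma mprod_sandwich:
  fixes U Q V :: "nat \<Rightarrow> complex mat"
  assumes "\<And>t. t \<in> set ts \<Longrightarrow> U t \<in> carrier_mat n n \<and> Q t \<in> carrier_mat n n \<and> V t \<in> carrier_mat n n"
    and "distinct ts"
    and "\<And>s t. s \<in> set ts \<Longrightarrow> t \<in> set ts \<Longrightarrow> s \<noteq> t \<Longrightarrow>
      U s * Q t = Q t * U s \<and> V s * U t = U t * V s \<and> V s * Q t = Q t * V s \<and> V s * V t = V t * V s"
  shows "mprod n (map U ts) * mprod n (map Q ts) * mprod n (rev (map V ts))
    = mprod n (map (\<lambda>t. U t * Q t * V t) ts)"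
  using assms
proof (induction ts)
  case Nil then show ?case by simp
next
  case (Cons t ts)
  let ?E = "mprod n (map U ts)" and ?P = "mprod n (map Q ts)" and ?F = "mprod n (rev (map V ts))"
    and ?W = "mprod n (map (\<lambda>t. U t * Q t * V t) ts)"
  have car: "U t \<in> carrier_mat n n" "Q t \<in> carrier_mat n n" "V t \<in> carrier_mat n n"
    "?E \<in> carrier_mat n n" "?P \<in> carrier_mat n n" "?F \<in> carrier_mat n n" "?W \<in> carrier_mat n n"
    using Cons.prems(1) by (auto intro!: mprod_carrier mult_carrier_square)
  have other: "s \<in> set (t # ts)" "t \<in> set (t # ts)" "s \<noteq> t" if "s \<in> set ts" for s
    using that Cons.prems(2) by auto
  have IH: "?E * ?P * ?F = ?W"
  proof (rule Cons.IH)
    show "U s \<in> carrier_mat n n \<and> Q s \<in> carrier_mat n n \<and> V s \<in> carrier_mat n n" if "s \<in> set ts" for s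
      using Cons.prems(1) that by simp
    show "distinct ts" using Cons.prems(2) by simp
    show "U s * Q s' = Q s' * U s \<and> V s * U s' = U s' * V s \<and>
        V s * Q s' = Q s' * V s \<and> V s * V s' = V s' * V s"
      if "s \<in> set ts" "s' \<in> set ts" "s \<noteq> s'" for s s'
      using Cons.prems(3) that by (meson list.set_intros(2))
  qed
  have Q_E: "Q t * ?E = ?E * Q t"
  proof (rule mult_commute_mprod[OF car(2)])
    fix Y assume "Y \<in> set (map U ts)"
    then obtain s where s: "s \<in> set ts" "Y = U s" by auto
    then show "Y \<in> carrier_mat n n \<and> Q t * Y = Y * Q t"
      using Cons.prems(1)[of s] Cons.prems(3)[OF other[OF s(1)]] by auto
  qed
  have V_W: "V t * ?W = ?W * V t"
  proof (rule mult_commute_mprod[OF car(3)])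
    fix Y assume "Y \<in> set (map (\<lambda>t. U t * Q t * V t) ts)"
    then obtain s where s: "s \<in> set ts" "Y = U s * Q s * V s" by auto
    have car_s: "U s \<in> carrier_mat n n" "Q s \<in> carrier_mat n n" "V s \<in> carrier_mat n n"
      using Cons.prems(1) s(1) by auto
    have "V t * U s = U s * V t" "V t * Q s = Q s * V t" "V t * V s = V s * V t"
      using Cons.prems(3)[OF other(2,1)[OF s(1)] other(3)[OF s(1), symmetric]] by auto
    from mult_commute_mult3[OF car(3) car_s this] show "Y \<in> carrier_mat n n \<and> V t * Y = Y * V t"
      unfolding s(2) using car_s by (simp add: mult_carrier_square)
  qed
  have "mprod n (rev (map V ts) @ [V t]) = ?F * mprod n [V t]"
    by (rule mprod_append) (use Cons.prems(1) in auto)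
  then have "mprod n (rev (map V (t # ts))) = ?F * V t"
    using car(3) by (simp add: right_mult_one_mat)
  then show ?case
    using mult_sandwich_commute[OF car Q_E[symmetric] V_W IH] by simp
qed

lemma mprod_conjugate:
  fixes U Q V :: "nat \<Rightarrow> complex mat"
  assumes carrier: "\<And>t. t \<in> set ts \<Longrightarrow> U t \<in> carrier_mat n n \<and> Q t \<in> carrier_mat n n \<and> V t \<in> carrier_mat n n"
    and distinct: "distinct ts"
    and adjoint: "\<And>t. t \<in> set ts \<Longrightarrow> mat_adjoint (U t) = V t"
    and commute: "\<And>s t. s \<in> set ts \<Longrightarrow> t \<in> set ts \<Longrightarrow> s \<noteq> t \<Longrightarrow>
      U s * Q t = Q t * U s \<and> V s * U t = U t * V s \<and> V s * Q t = Q t * V s \<and> V s * V t = V t * V s"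
  shows "mprod n (map U ts) * mprod n (map Q ts) * mat_adjoint (mprod n (map U ts))
    = mprod n (map (\<lambda>t. U t * Q t * V t) ts)"
proof -
  have "mat_adjoint (mprod n (map U ts)) = mprod n (rev (map mat_adjoint (map U ts)))"
    by (rule mat_adjoint_mprod) (use carrier in auto)
  also have "map mat_adjoint (map U ts) = map V ts"
    using adjoint by simp
  finally have adjoint_mprod: "mat_adjoint (mprod n (map U ts)) = mprod n (rev (map V ts))" .
  from carrier distinct commute
  have "mprod n (map U ts) * mprod n (map Q ts) * mprod n (rev (map V ts))
      = mprod n (map (\<lambda>t. U t * Q t * V t) ts)"
    by (rule mprod_sandwich)
  then show ?thesis by (simp only: adjoint_mprod)
qed

lemma slice_windows_disjoint: "(t::nat) \<noteq> t' \<Longrightarrow> t * L + L \<le> t' * L \<or> t' * L + L \<le> t * L"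
  using mult_le_mono1[of "Suc t" t' L] mult_le_mono1[of "Suc t'" t L] by (cases "t < t'") auto

lemma slice_carrier: "t < N \<Longrightarrow> slice L N t A \<in> carrier_mat (2 ^ (N * L)) (2 ^ (N * L))"
  by (simp add: slice_eq_embed_modes)

lemma slice_commute:
  assumes "t < N" "t' < N" "t \<noteq> t'"
    and "X \<in> carrier_mat (2 ^ L) (2 ^ L)" "Y \<in> carrier_mat (2 ^ L) (2 ^ L)" "parity_homogeneous L False X"
  shows "slice L N t X * slice L N t' Y = slice L N t' Y * slice L N t X"
  using embed_modes_commute[OF slice_windows_disjoint[OF assms(3)] slice_window_le slice_window_le assms(4-6)]
    assms(1,2)
  by (simp add: slice_eq_embed_modes)

lemma mexp_smult_slice:
  assumes "t < N" "B \<in> carrier_mat (2 ^ L) (2 ^ L)"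
  shows "mexp (x \<cdot>\<^sub>m slice L N t B) = slice L N t (mexp (x \<cdot>\<^sub>m B))"
  using mexp_embed_modes[OF smult_carrier_mat[OF assms(2)] slice_window_le[OF assms(1)]]
  by (simp add: slice_eq_embed_modes[OF assms(1)] embed_modes_smult[OF assms(2)])

lemma slice_commutator_eq_zero:
  assumes "t < N" "t' < N" "H \<in> carrier_mat (2 ^ L) (2 ^ L)" "parity_homogeneous L False H"
  shows "slice L N t H * slice L N t' H - slice L N t' H * slice L N t H = 0\<^sub>m (2 ^ (N * L)) (2 ^ (N * L))"
proof -
  have "slice L N t H * slice L N t' H = slice L N t' H * slice L N t H"
    using slice_commute[OF assms(1,2) _ assms(3,3,4)] by (cases "t = t'") auto
  then show ?thesis
    using minus_r_inv_mat[OF mult_carrier_mat[OF slice_carrier[OF assms(2)] slice_carrier[OF assms(1)]]]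
    by simp
qed

lemma hermitian_mat_slice:
  assumes "t < N" "A \<in> carrier_mat (2 ^ L) (2 ^ L)" "hermitian_mat A"
  shows "hermitian_mat (slice L N t A)"
  using assms by (simp add: hermitian_mat_def slice_eq_embed_modes embed_modes_adjoint[symmetric])

lemma mat_adjoint_mexp_smult_hermitian:
  assumes "A \<in> carrier_mat n n" "hermitian_mat A"
  shows "mat_adjoint (mexp (x \<cdot>\<^sub>m A)) = mexp (cnj x \<cdot>\<^sub>m A)"
  using assms mat_adjoint_mexp[OF smult_carrier_mat[OF assms(1)]]
  by (simp add: mat_adjoint_smult hermitian_mat_def)

lemma mprod_exp_slices_conjugate:
  fixes c :: "nat \<Rightarrow> complex"
  assumes H: "H \<in> carrier_mat (2 ^ L) (2 ^ L)" "hermitian_mat H" "parity_homogeneous L False H"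
    and Ob: "\<And>t. t < N \<Longrightarrow> Ob t \<in> carrier_mat (2 ^ L) (2 ^ L)"
  shows "mprod (2 ^ (N * L)) (map (\<lambda>t. mexp (c t \<cdot>\<^sub>m slice L N t H)) [0..<N])
      * mprod (2 ^ (N * L)) (map (\<lambda>t. slice L N t (Ob t)) [0..<N])
      * mat_adjoint (mprod (2 ^ (N * L)) (map (\<lambda>t. mexp (c t \<cdot>\<^sub>m slice L N t H)) [0..<N]))
    = mprod (2 ^ (N * L)) (map (\<lambda>t. mexp (c t \<cdot>\<^sub>m slice L N t H) * slice L N t (Ob t)
        * mexp (cnj (c t) \<cdot>\<^sub>m slice L N t H)) [0..<N])"
proof -
  have exp_H: "mexp (x \<cdot>\<^sub>m H) \<in> carrier_mat (2 ^ L) (2 ^ L)" "parity_homogeneous L False (mexp (x \<cdot>\<^sub>m H))"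
    for x
    using H by (simp_all add: mexp_carrier parity_homogeneous_mexp parity_homogeneous_smult)
  have adjoint: "mat_adjoint (mexp (c t \<cdot>\<^sub>m slice L N t H)) = mexp (cnj (c t) \<cdot>\<^sub>m slice L N t H)"
    if "t < N" for t
    using mat_adjoint_mexp_smult_hermitian[OF slice_carrier hermitian_mat_slice[OF that H(1,2)]] that
    by simp
  show ?thesis
    by (rule mprod_conjugate)
      (use Ob exp_H adjoint H(1) in \<open>auto simp: mexp_smult_slice slice_carrier intro!: slice_commute\<close>)
qed

theorem lemma3:
  fixes L N :: nat and \<epsilon> :: real and H :: "complex mat"
    and Ob :: "nat \<Rightarrow> complex mat"
  assumes "L \<ge> 1" and "N \<ge> 1" and "\<epsilon> > 0"
    and "H \<in> carrier_mat (2 ^ L) (2 ^ L)"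
    and "hermitian_mat H"
    and "parity_preserving L H"
    and "\<forall>t < N. Ob t \<in> carrier_mat (2 ^ L) (2 ^ L)"
  shows "(\<forall>t < N. \<forall>t' < N.
            slice L N t H * slice L N t' H - slice L N t' H * slice L N t H
              = 0\<^sub>m (2 ^ (N * L)) (2 ^ (N * L)))
       \<and> (let D = 2 ^ (N * L);
              V = mprod D (map (\<lambda>t. mexp ((\<i> * of_real (\<epsilon> * real t)) \<cdot>\<^sub>m slice L N t H)) [0..<N])
          in V * mprod D (map (\<lambda>t. slice L N t (Ob t)) [0..<N]) * mat_adjoint V
             = mprod D (map (\<lambda>t. mexp ((\<i> * of_real (\<epsilon> * real t)) \<cdot>\<^sub>m slice L N t H)
                                 * slice L N t (Ob t)
                                 * mexp ((- \<i> * of_real (\<epsilon> * real t)) \<cdot>\<^sub>m slice L N t H)) [0..<N]))"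
proof -
  have even: "parity_homogeneous L False H"
    using assms(6) by (rule parity_preserving_imp_even)
  have "cnj (\<i> * complex_of_real (\<epsilon> * real t)) = - \<i> * complex_of_real (\<epsilon> * real t)" for t
    by simp
  then show ?thesis
    using slice_commutator_eq_zero[OF _ _ assms(4) even] assms(7)
      mprod_exp_slices_conjugate[OF assms(4,5) even, of N Ob "\<lambda>t. \<i> * complex_of_real (\<epsilon> * real t)"]
    by (simp add: Let_def)
qed

end
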